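(* Let $(Z_n)_{n\ge0}$ be a linear fractional Galton–Watson process in i.i.d. random environment (as in the context) which is supercritical, i.e. $R_\infty<\infty=R^{(-1)}_\infty$ a.s. Then $$\frac{1}{1-q(\mathbf{e})}=R_\infty\in[1,\infty)\quad\text{a.s.},$$ in particular $q(\mathbf{e})<1$ a.s. Furthermore, $$\lim_{n\to\infty}\frac{1}{\Pi_n}\Big(\frac{1}{R_n}-\mathbf{P}(Z_n>0)\Big)=\frac{1}{R_\infty^2}\quad\text{a.s.}$$
   Context: Let $(A_n,B_n)_{n\ge1}$ be i.i.d. copies of $(A,B)$ with $\mathbb{P}(A>0,B>0,A+B\ge1)=1$; $\mathbf{e}=(A_n,B_n)_{n\ge1}$. For $a,b>0$, $a+b\ge1$, $LF(a,b)$ is the distribution on $\mathbb{N}_0$ whose generating function $f$ satisfies $1/(1-f(s))=a/(1-s)+b$, $s\in[0,1)$. $(Z_n)$, $Z_0=1$: given $\mathbf{e}$, each individual of generation $k-1$ independently has offspring law $LF(A_k,B_k)$. $\mathbf{P}=\mathbb{P}(\cdot\mid\mathbf{e})$, and $q(\mathbf{e})=\lim_{n\to\infty}\mathbb{P}(Z_n=0\mid A_1,B_1,\dots,A_n,B_n)$ is the quenched extinction probability. $\Pi_0=1$, $\Pi_n=\prod_{k=1}^nA_k$, $R_n=\sum_{k=1}^n\Pi_{k-1}B_k$, $R_\infty=\lim R_n$, $R^{(-1)}_\infty=\sum_{k\ge1}\Pi_k^{-1}B_k$. *)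

theory Defs
  imports "HOL-Probability.Probability"
begin

definition LF :: "real \<Rightarrow> real \<Rightarrow> nat pmf" where
  "LF a b = (THE p. \<forall>s::real. 0 \<le> s \<and> s < 1 \<longrightarrow>
              1 / (1 - (\<Sum>k. pmf p k * s ^ k)) = a / (1 - s) + b)"

fun sum_iid :: "nat pmf \<Rightarrow> nat \<Rightarrow> nat pmf" where
  "sum_iid p 0 = return_pmf 0"
| "sum_iid p (Suc n) = bind_pmf p (\<lambda>x. map_pmf (\<lambda>y. x + y) (sum_iid p n))"

text \<open>Quenched law of Z_n given the environment (a k, b k), k >= 1: Z_0 = 1 and each
  individual of generation k-1 independently has offspring law LF(a k, b k).\<close>
fun Zlaw :: "(nat \<Rightarrow> real) \<Rightarrow> (nat \<Rightarrow> real) \<Rightarrow> nat \<Rightarrow> nat pmf" where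
  "Zlaw a b 0 = return_pmf 1"
| "Zlaw a b (Suc n) = bind_pmf (Zlaw a b n) (sum_iid (LF (a (Suc n)) (b (Suc n))))"

definition qext :: "(nat \<Rightarrow> real) \<Rightarrow> (nat \<Rightarrow> real) \<Rightarrow> real" where
  "qext a b = lim (\<lambda>n. pmf (Zlaw a b n) 0)"

definition Pi_env :: "(nat \<Rightarrow> real) \<Rightarrow> nat \<Rightarrow> real" where
  "Pi_env a n = (\<Prod>k=1..n. a k)"

definition R_env :: "(nat \<Rightarrow> real) \<Rightarrow> (nat \<Rightarrow> real) \<Rightarrow> nat \<Rightarrow> real" where
  "R_env a b n = (\<Sum>k=1..n. Pi_env a (k - 1) * b k)"

text \<open>R_infinity = sum over k >= 1 of Pi_(k-1) B_k (reindexed from 0).\<close>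
definition R_inf :: "(nat \<Rightarrow> real) \<Rightarrow> (nat \<Rightarrow> real) \<Rightarrow> real" where
  "R_inf a b = (\<Sum>k. Pi_env a k * b (Suc k))"

end

theory Submission
  imports Defs
begin

(* For LF(a,b) the substitution u = 1/(1 - s) turns the generating function into the affine
   map u \<mapsto> a u + b.  Composing along the environment gives
   1/(1 - E[s^Z_n]) = \<Pi>_n/(1 - s) + R_n, so P(Z_n > 0) = 1/(\<Pi>_n + R_n).  Since a + b \<ge> 1 the
   sequence \<Pi>_n + R_n is nondecreasing, hence \<Pi>_n \<ge> \<Pi>_m - (R_\<infinity> - R_m) for n \<ge> m.  If \<Pi>_n
   did not tend to 0 it would thus stay above some c > 0, and then \<Sum> B_k/\<Pi>_k would be dominated
   by \<Sum> \<Pi>_(k-1) B_k / c^2 < \<infinity>, contradicting supercriticality.  So \<Pi>_n + R_n \<rightarrow> R_\<infinity> \<ge> 1,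
   q = 1 - 1/R_\<infinity>, and (1/R_n - P(Z_n > 0))/\<Pi>_n = 1/(R_n (\<Pi>_n + R_n)) \<rightarrow> 1/R_\<infinity>^2. *)

section \<open>Probability generating functions\<close>

definition pgf :: "nat pmf \<Rightarrow> real \<Rightarrow> real" where
  "pgf p s = (\<Sum>k. pmf p k * s ^ k)"

lemma nn_integral_power_pmf:
  assumes "0 \<le> s"
  shows "(\<integral>\<^sup>+k. ennreal (s ^ k) \<partial>measure_pmf p) = (\<Sum>k. ennreal (pmf p k * s ^ k))"
  unfolding nn_integral_measure_pmf nn_integral_count_space_nat
  using assms by (simp add: ennreal_mult)

lemma nn_integral_power_le_1:
  assumes "0 \<le> s" "s \<le> 1"
  shows "(\<integral>\<^sup>+k. ennreal (s ^ k) \<partial>measure_pmf p) \<le> 1"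
proof -
  have "(\<integral>\<^sup>+k. ennreal (s ^ k) \<partial>measure_pmf p) \<le> (\<integral>\<^sup>+k. 1 \<partial>measure_pmf p)"
    using assms by (intro nn_integral_mono) (simp add: power_le_one)
  then show ?thesis by simp
qed

lemma summable_pgf:
  assumes "0 \<le> s" "s \<le> 1"
  shows "summable (\<lambda>k. pmf p k * s ^ k)"
  using nn_integral_power_le_1[OF assms, of p] assms
  by (intro summable_suminf_not_top) (auto simp: nn_integral_power_pmf top_unique)

lemma nn_integral_power_eq_pgf:
  assumes "0 \<le> s" "s \<le> 1"
  shows "(\<integral>\<^sup>+k. ennreal (s ^ k) \<partial>measure_pmf p) = ennreal (pgf p s)"
  unfolding nn_integral_power_pmf[OF assms(1)] pgf_def
  using assms summable_pgf[OF assms] by (intro suminf_ennreal2) auto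

lemma pgf_nonneg: "0 \<le> s \<Longrightarrow> s \<le> 1 \<Longrightarrow> 0 \<le> pgf p s"
  unfolding pgf_def by (intro suminf_nonneg summable_pgf) auto

lemma pgf_le_1:
  assumes "0 \<le> s" "s \<le> 1"
  shows "pgf p s \<le> 1"
  using nn_integral_power_le_1[OF assms, of p] pgf_nonneg[OF assms, of p]
  by (simp add: nn_integral_power_eq_pgf[OF assms])

lemma pgf_at_0 [simp]: "pgf p 0 = pmf p 0"
  by (simp add: pgf_def)

lemma pgf_return_pmf: "0 \<le> s \<Longrightarrow> s \<le> 1 \<Longrightarrow> pgf (return_pmf m) s = s ^ m"
  using nn_integral_power_eq_pgf[of s "return_pmf m"] pgf_nonneg[of s "return_pmf m"] by simp

lemma nn_integral_power_sum_iid: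
  assumes "0 \<le> s"
  shows "(\<integral>\<^sup>+k. ennreal (s ^ k) \<partial>sum_iid q m) = (\<integral>\<^sup>+k. ennreal (s ^ k) \<partial>q) ^ m"
proof (induction m)
  case 0
  then show ?case by simp
next
  case (Suc m)
  have "(\<integral>\<^sup>+k. ennreal (s ^ k) \<partial>sum_iid q (Suc m))
      = (\<integral>\<^sup>+x. ennreal (s ^ x) * (\<integral>\<^sup>+y. ennreal (s ^ y) \<partial>sum_iid q m) \<partial>q)"
    using assms by (simp add: power_add ennreal_mult nn_integral_cmult)
  also have "\<dots> = (\<integral>\<^sup>+k. ennreal (s ^ k) \<partial>q) ^ Suc m"
    by (simp add: Suc.IH nn_integral_multc)
  finally show ?case .
qed

lemma pgf_bind_sum_iid:
  assumes "0 \<le> s" "s \<le> 1"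
  shows "pgf (bind_pmf p (sum_iid q)) s = pgf p (pgf q s)"
proof -
  let ?t = "pgf q s"
  have t: "0 \<le> ?t" "?t \<le> 1"
    using pgf_nonneg[OF assms] pgf_le_1[OF assms] by auto
  have "ennreal (pgf (bind_pmf p (sum_iid q)) s)
      = (\<integral>\<^sup>+m. (\<integral>\<^sup>+k. ennreal (s ^ k) \<partial>sum_iid q m) \<partial>p)"
    by (simp add: nn_integral_power_eq_pgf[OF assms, symmetric])
  also have "\<dots> = (\<integral>\<^sup>+m. ennreal (?t ^ m) \<partial>p)"
    unfolding nn_integral_power_sum_iid[OF assms(1)]
    by (simp only: nn_integral_power_eq_pgf[OF assms] ennreal_power[OF t(1)])
  also have "\<dots> = ennreal (pgf p ?t)"
    by (rule nn_integral_power_eq_pgf[OF t])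
  finally show ?thesis
    using pgf_nonneg[OF assms] pgf_nonneg[OF t] by simp
qed

lemma summable_bounded_powser:
  fixes d :: "nat \<Rightarrow> real"
  assumes "\<And>k. \<bar>d k\<bar> \<le> 1" "0 \<le> s" "s < 1"
  shows "summable (\<lambda>k. d k * s ^ k)"
proof (rule summable_comparison_test'[OF summable_geometric[of s]])
  show "norm (d k * s ^ k) \<le> s ^ k" for k
    using assms by (simp add: abs_mult mult_left_le_one_le)
qed (use assms in auto)

lemma powser_const_coeff_eq_0:
  fixes d :: "nat \<Rightarrow> real"
  assumes "\<And>k. \<bar>d k\<bar> \<le> 1" and "\<And>s. 0 < s \<Longrightarrow> s < 1 \<Longrightarrow> (\<Sum>k. d k * s ^ k) = 0"
  shows "d 0 = 0"
proof -
  let ?f = "\<lambda>s. \<Sum>k. d k * s ^ k"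
  have "isCont ?f 0"
    by (rule isCont_powser[OF summable_bounded_powser[OF assms(1), of "1/2"]]) auto
  then have "(?f \<longlongrightarrow> d 0) (at_right 0)"
    by (auto simp: isCont_def filterlim_at_split)
  moreover have "eventually (\<lambda>s. ?f s = 0) (at_right (0::real))"
    unfolding eventually_at_right[OF zero_less_one] by (intro exI[of _ 1]) (auto intro: assms(2))
  then have "(?f \<longlongrightarrow> 0) (at_right 0)"
    by (rule tendsto_eventually)
  ultimately show ?thesis
    using tendsto_unique[OF trivial_limit_at_right_real] by blast
qed

lemma powser_coeff_eq_0:
  fixes d :: "nat \<Rightarrow> real"
  assumes "\<And>k. \<bar>d k\<bar> \<le> 1" and "\<And>s. 0 < s \<Longrightarrow> s < 1 \<Longrightarrow> (\<Sum>k. d k * s ^ k) = 0"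
  shows "d n = 0"
  using assms
proof (induction n arbitrary: d)
  case 0
  then show ?case by (rule powser_const_coeff_eq_0)
next
  case (Suc n)
  have "(\<Sum>k. d (Suc k) * s ^ k) = 0" if "0 < s" "s < 1" for s
  proof -
    have "(\<Sum>k. d (Suc k) * s ^ k) * s = (\<Sum>k. d k * s ^ k) - d 0"
      using summable_bounded_powser[OF Suc.prems(1)] that by (intro powser_split_head(2)) auto
    also have "\<dots> = 0"
      using Suc.prems that powser_const_coeff_eq_0[OF Suc.prems] by simp
    finally show ?thesis using that by simp
  qed
  then show ?case using Suc.IH[of "\<lambda>k. d (Suc k)"] Suc.prems(1) by blast
qed

lemma pmf_eq_if_pgf_eq:
  assumes "\<And>s. 0 < s \<Longrightarrow> s < 1 \<Longrightarrow> pgf p s = pgf q s"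
  shows "p = q"
proof (rule pmf_eqI)
  fix n
  have "pmf p n - pmf q n = 0"
  proof (rule powser_coeff_eq_0)
    show "\<bar>pmf p k - pmf q k\<bar> \<le> 1" for k
      using pmf_le_1[of p k] pmf_le_1[of q k] pmf_nonneg[of p k] pmf_nonneg[of q k] by linarith
    fix s :: real
    assume s: "0 < s" "s < 1"
    have "(\<Sum>k. (pmf p k - pmf q k) * s ^ k) = pgf p s - pgf q s"
      unfolding pgf_def left_diff_distrib using s summable_pgf[of s]
      by (intro suminf_diff[symmetric]) auto
    then show "(\<Sum>k. (pmf p k - pmf q k) * s ^ k) = 0"
      using assms s by simp
  qed
  then show "pmf p n = pmf q n" by simp
qed

section \<open>The linear fractional law\<close>

definition lf_weight :: "real \<Rightarrow> real \<Rightarrow> nat \<Rightarrow> real" where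
  "lf_weight a b k =
     (if k = 0 then (a + b - 1) / (a + b) else a * b ^ (k - 1) / (a + b) ^ (k + 1))"

lemma lf_weight_powser_sums:
  fixes a b s :: real
  assumes "0 < a" "0 < b" "1 \<le> a + b" "0 \<le> s" "s \<le> 1"
  shows "(\<lambda>k. lf_weight a b k * s ^ k) sums (1 - (1 - s) / (a + b - b * s))"
proof -
  define c where "c = a + b"
  have "b * s \<le> b"
    using assms by (simp add: mult_left_le)
  then have c: "0 < c" "0 < c - b * s"
    using assms unfolding c_def by linarith+
  then have ratio: "\<bar>b * s / c\<bar> < 1"
    using assms by (simp add: field_simps)
  have "(\<lambda>k. lf_weight a b (Suc k) * s ^ Suc k) = (\<lambda>k. a * s / c\<^sup>2 * (b * s / c) ^ k)"
    by (simp add: lf_weight_def c_def power_divide power_mult_distrib power2_eq_square field_simps)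
  moreover have "(\<lambda>k. a * s / c\<^sup>2 * (b * s / c) ^ k) sums (a * s / c\<^sup>2 * (1 / (1 - b * s / c)))"
    using ratio by (intro sums_mult geometric_sums) simp
  ultimately have "(\<lambda>k. lf_weight a b (Suc k) * s ^ Suc k) sums (a * s / c\<^sup>2 * (1 / (1 - b * s / c)))"
    by simp
  then have "(\<lambda>k. lf_weight a b k * s ^ k) sums (a * s / c\<^sup>2 * (1 / (1 - b * s / c)) + lf_weight a b 0)"
    using sums_Suc_iff[of "\<lambda>k. lf_weight a b k * s ^ k"] by simp
  also have "lf_weight a b 0 = (c - 1) / c"
    by (simp add: lf_weight_def c_def)
  also have "a * s / c\<^sup>2 * (1 / (1 - b * s / c)) + (c - 1) / c
      = (a * s + (c - 1) * (c - b * s)) / (c * (c - b * s))"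
    using c by (simp add: field_simps power2_eq_square)
  also have "a * s + (c - 1) * (c - b * s) = c * (c - b * s) - c * (1 - s)"
    by (simp add: c_def algebra_simps)
  also have "(c * (c - b * s) - c * (1 - s)) / (c * (c - b * s)) = 1 - (1 - s) / (c - b * s)"
    using c by (simp add: field_simps)
  finally show ?thesis
    by (simp add: c_def)
qed

definition lf_pmf :: "real \<Rightarrow> real \<Rightarrow> nat pmf" where
  "lf_pmf a b = embed_pmf (lf_weight a b)"

lemma pmf_lf_pmf:
  assumes "0 < a" "0 < b" "1 \<le> a + b"
  shows "pmf (lf_pmf a b) = lf_weight a b"
proof -
  have nonneg: "0 \<le> lf_weight a b k" for k
    using assms by (auto simp: lf_weight_def)
  have "lf_weight a b sums 1"
    using lf_weight_powser_sums[OF assms, of 1] by simp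
  then have "(\<integral>\<^sup>+k. ennreal (lf_weight a b k) \<partial>count_space UNIV) = 1"
    by (simp add: nn_integral_count_space_nat suminf_ennreal2 nonneg sums_summable sums_unique[symmetric])
  then show ?thesis
    unfolding lf_pmf_def using nonneg by (intro ext pmf_embed_pmf) auto
qed

lemma inverse_one_minus_pgf_lf_pmf:
  assumes "0 < a" "0 < b" "1 \<le> a + b" "0 \<le> s" "s < 1"
  shows "1 / (1 - pgf (lf_pmf a b) s) = a / (1 - s) + b"
proof -
  have "1 - pgf (lf_pmf a b) s = (1 - s) / (a + b - b * s)"
    unfolding pgf_def pmf_lf_pmf[OF assms(1-3)]
    using lf_weight_powser_sums[OF assms(1-4)] assms(5) by (simp add: sums_iff)
  then have "1 / (1 - pgf (lf_pmf a b) s) = (a + b - b * s) / (1 - s)"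
    by simp
  also have "\<dots> = a / (1 - s) + b"
    using assms(5) by (simp add: field_simps)
  finally show ?thesis .
qed

lemma LF_eq_lf_pmf:
  assumes "0 < a" "0 < b" "1 \<le> a + b"
  shows "LF a b = lf_pmf a b"
  unfolding LF_def
proof (rule the_equality)
  let ?mobius = "\<lambda>s. a / (1 - s) + b"
  show "\<forall>s. 0 \<le> s \<and> s < 1 \<longrightarrow> 1 / (1 - (\<Sum>k. pmf (lf_pmf a b) k * s ^ k)) = ?mobius s"
    using inverse_one_minus_pgf_lf_pmf[OF assms] by (simp add: pgf_def)
  fix p
  assume p: "\<forall>s. 0 \<le> s \<and> s < 1 \<longrightarrow> 1 / (1 - (\<Sum>k. pmf p k * s ^ k)) = ?mobius s"
  show "p = lf_pmf a b"
  proof (rule pmf_eq_if_pgf_eq)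
    fix s :: real
    assume s: "0 < s" "s < 1"
    have "1 / (1 - pgf p s) = 1 / (1 - pgf (lf_pmf a b) s)"
      using p inverse_one_minus_pgf_lf_pmf[OF assms] s by (simp add: pgf_def)
    then show "pgf p s = pgf (lf_pmf a b) s"
      by simp
  qed
qed

lemma inverse_one_minus_pgf_LF:
  assumes "0 < a" "0 < b" "1 \<le> a + b" "0 \<le> s" "s < 1"
  shows "1 / (1 - pgf (LF a b) s) = a / (1 - s) + b"
  using inverse_one_minus_pgf_lf_pmf[OF assms] LF_eq_lf_pmf[OF assms(1-3)] by simp

section \<open>Quenched survival probabilities\<close>

lemma Pi_env_0 [simp]: "Pi_env a 0 = 1"
  by (simp add: Pi_env_def)

lemma Pi_env_Suc: "Pi_env a (Suc n) = Pi_env a n * a (Suc n)"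
  by (simp add: Pi_env_def)

lemma R_env_0 [simp]: "R_env a b 0 = 0"
  by (simp add: R_env_def)

lemma R_env_Suc: "R_env a b (Suc n) = R_env a b n + Pi_env a n * b (Suc n)"
  by (simp add: R_env_def)

lemma R_env_eq_sum_lessThan: "R_env a b n = (\<Sum>k<n. Pi_env a k * b (Suc k))"
  by (induction n) (simp_all add: R_env_Suc)

locale lf_environment =
  fixes a b :: "nat \<Rightarrow> real"
  assumes a_pos: "1 \<le> k \<Longrightarrow> 0 < a k"
    and b_pos: "1 \<le> k \<Longrightarrow> 0 < b k"
    and a_plus_b_ge_1: "1 \<le> k \<Longrightarrow> 1 \<le> a k + b k"
begin

lemma Pi_env_pos: "0 < Pi_env a n"
  unfolding Pi_env_def using a_pos by (intro prod_pos) auto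

lemma R_env_term_pos: "0 < Pi_env a k * b (Suc k)"
  using Pi_env_pos b_pos by simp

lemma R_env_pos:
  assumes "1 \<le> n"
  shows "0 < R_env a b n"
  unfolding R_env_eq_sum_lessThan using assms R_env_term_pos by (intro sum_pos) (auto simp: lessThan_empty_iff)

lemma inverse_one_minus_pgf_Zlaw:
  "0 \<le> s \<Longrightarrow> s < 1 \<Longrightarrow> 1 / (1 - pgf (Zlaw a b n) s) = Pi_env a n / (1 - s) + R_env a b n"
proof (induction n arbitrary: s)
  case 0
  then show ?case by (simp add: pgf_return_pmf)
next
  case (Suc n)
  let ?t = "pgf (LF (a (Suc n)) (b (Suc n))) s"
  have t: "1 / (1 - ?t) = a (Suc n) / (1 - s) + b (Suc n)"
    using Suc.prems a_pos b_pos a_plus_b_ge_1 by (intro inverse_one_minus_pgf_LF) auto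
  moreover have "0 < a (Suc n) / (1 - s) + b (Suc n)"
    using Suc.prems a_pos[of "Suc n"] b_pos[of "Suc n"] by (simp add: add_pos_pos)
  ultimately have "?t \<noteq> 1"
    \<comment> \<open>otherwise the left-hand side of t would be 1 / 0 = 0\<close>
    by auto
  then have t_range: "0 \<le> ?t" "?t < 1"
    using Suc.prems pgf_nonneg[of s] pgf_le_1[of s] by (auto simp: order.order_iff_strict)
  have "1 / (1 - pgf (Zlaw a b (Suc n)) s) = 1 / (1 - pgf (Zlaw a b n) ?t)"
    using Suc.prems by (simp add: pgf_bind_sum_iid)
  also have "\<dots> = Pi_env a n * (1 / (1 - ?t)) + R_env a b n"
    using Suc.IH[OF t_range] by simp
  also have "\<dots> = Pi_env a (Suc n) / (1 - s) + R_env a b (Suc n)"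
    unfolding t Pi_env_Suc R_env_Suc by (simp add: algebra_simps)
  finally show ?case .
qed

lemma survival_prob_Zlaw: "1 - pmf (Zlaw a b n) 0 = 1 / (Pi_env a n + R_env a b n)"
proof -
  have "1 - pmf (Zlaw a b n) 0 = 1 / (1 / (1 - pmf (Zlaw a b n) 0))"
    by simp
  also have "1 / (1 - pmf (Zlaw a b n) 0) = Pi_env a n + R_env a b n"
    using inverse_one_minus_pgf_Zlaw[of 0 n] by simp
  finally show ?thesis .
qed

lemma incseq_Pi_env_plus_R_env: "incseq (\<lambda>n. Pi_env a n + R_env a b n)"
proof (rule incseq_SucI)
  fix n
  have "Pi_env a (Suc n) + R_env a b (Suc n) - (Pi_env a n + R_env a b n)
      = Pi_env a n * (a (Suc n) + b (Suc n) - 1)"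
    by (simp add: Pi_env_Suc R_env_Suc algebra_simps)
  also have "\<dots> \<ge> 0"
    using Pi_env_pos[of n] a_plus_b_ge_1[of "Suc n"] by simp
  finally show "Pi_env a n + R_env a b n \<le> Pi_env a (Suc n) + R_env a b (Suc n)"
    by simp
qed

end

section \<open>Supercritical environments\<close>

locale supercritical_environment = lf_environment +
  assumes summable_R: "summable (\<lambda>k. Pi_env a k * b (Suc k))"
    and not_summable_R_inverse: "\<not> summable (\<lambda>k. b (Suc k) / Pi_env a (Suc k))"
begin

lemma R_env_tendsto_R_inf: "R_env a b \<longlonglongrightarrow> R_inf a b"
  unfolding R_env_eq_sum_lessThan[abs_def] R_inf_def by (rule summable_LIMSEQ[OF summable_R])

lemma R_env_le_R_inf: "R_env a b n \<le> R_inf a b"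
  unfolding R_env_eq_sum_lessThan R_inf_def
  using R_env_term_pos by (intro sum_le_suminf[OF summable_R]) (auto intro: less_imp_le)

lemma Pi_env_ge_minus_tail:
  assumes "m \<le> n"
  shows "Pi_env a m - (R_inf a b - R_env a b m) \<le> Pi_env a n"
  using incseqD[OF incseq_Pi_env_plus_R_env assms] R_env_le_R_inf[of n] by simp

lemma not_eventually_Pi_env_ge:
  assumes "0 < c"
  shows "\<not> eventually (\<lambda>n. c \<le> Pi_env a n) sequentially"
proof
  assume "eventually (\<lambda>n. c \<le> Pi_env a n) sequentially"
  then obtain N where N: "\<And>n. N \<le> n \<Longrightarrow> c \<le> Pi_env a n"
    by (auto simp: eventually_sequentially)
  have "summable (\<lambda>k. b (Suc k) / Pi_env a (Suc k))"
  proof (rule summable_comparison_test'[where N = N])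
    show "summable (\<lambda>k. Pi_env a k * b (Suc k) / c\<^sup>2)"
      using summable_R by (rule summable_divide)
    fix k
    assume "N \<le> k"
    then have "c \<le> Pi_env a k" "c \<le> Pi_env a (Suc k)"
      using N by auto
    then have "b (Suc k) / Pi_env a (Suc k) \<le> Pi_env a k * b (Suc k) / c\<^sup>2"
      using assms b_pos[of "Suc k"] by (simp add: field_simps power2_eq_square mult_mono)
    then show "norm (b (Suc k) / Pi_env a (Suc k)) \<le> Pi_env a k * b (Suc k) / c\<^sup>2"
      using b_pos[of "Suc k"] Pi_env_pos[of "Suc k"] by simp
  qed
  with not_summable_R_inverse show False ..
qed

lemma Pi_env_tendsto_0: "Pi_env a \<longlonglongrightarrow> 0"
proof (rule ccontr)
  assume "\<not> Pi_env a \<longlonglongrightarrow> 0"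
  then obtain \<epsilon> where \<epsilon>: "0 < \<epsilon>" and often: "frequently (\<lambda>n. \<epsilon> \<le> Pi_env a n) sequentially"
    using Pi_env_pos by (auto simp: tendsto_iff not_eventually not_less abs_of_pos)
  have "eventually (\<lambda>m. R_inf a b - R_env a b m < \<epsilon> / 2) sequentially"
    using order_tendstoD(1)[OF R_env_tendsto_R_inf, of "R_inf a b - \<epsilon> / 2"] \<epsilon>
    by (auto elim: eventually_mono)
  then obtain m where "\<epsilon> \<le> Pi_env a m" "R_inf a b - R_env a b m < \<epsilon> / 2"
    using frequently_eventually_conj[OF often] by (auto dest: frequently_ex)
  then have "eventually (\<lambda>n. \<epsilon> / 2 \<le> Pi_env a n) sequentially"
    using Pi_env_ge_minus_tail unfolding eventually_sequentially by (force intro!: exI[of _ m])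
  with not_eventually_Pi_env_ge[of "\<epsilon> / 2"] \<epsilon> show False
    by simp
qed

lemma Pi_env_plus_R_env_tendsto: "(\<lambda>n. Pi_env a n + R_env a b n) \<longlonglongrightarrow> R_inf a b"
  using tendsto_add[OF Pi_env_tendsto_0 R_env_tendsto_R_inf] by simp

lemma one_le_R_inf: "1 \<le> R_inf a b"
proof (rule LIMSEQ_le_const[OF Pi_env_plus_R_env_tendsto])
  show "\<exists>N. \<forall>n\<ge>N. 1 \<le> Pi_env a n + R_env a b n"
    using incseqD[OF incseq_Pi_env_plus_R_env, of 0] by auto
qed

lemma extinction_prob_tendsto: "(\<lambda>n. pmf (Zlaw a b n) 0) \<longlonglongrightarrow> 1 - 1 / R_inf a b"
proof -
  have "(\<lambda>n. 1 - 1 / (Pi_env a n + R_env a b n)) \<longlonglongrightarrow> 1 - 1 / R_inf a b"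
    using one_le_R_inf by (intro tendsto_intros Pi_env_plus_R_env_tendsto) auto
  then show ?thesis
    by (simp flip: survival_prob_Zlaw)
qed

lemma qext_eq: "qext a b = 1 - 1 / R_inf a b"
  unfolding qext_def using extinction_prob_tendsto by (rule limI)

lemma survival_deviation_eq:
  assumes "1 \<le> n"
  shows "(1 / R_env a b n - (1 - pmf (Zlaw a b n) 0)) / Pi_env a n
       = 1 / (R_env a b n * (Pi_env a n + R_env a b n))"
  unfolding survival_prob_Zlaw
  using R_env_pos[OF assms] Pi_env_pos[of n] by (simp add: divide_simps)

lemma survival_deviation_tendsto:
  "(\<lambda>n. (1 / R_env a b n - (1 - pmf (Zlaw a b n) 0)) / Pi_env a n) \<longlonglongrightarrow> 1 / (R_inf a b)\<^sup>2"
proof -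
  have "(\<lambda>n. 1 / (R_env a b n * (Pi_env a n + R_env a b n))) \<longlonglongrightarrow> 1 / (R_inf a b * R_inf a b)"
    using one_le_R_inf by (intro tendsto_intros R_env_tendsto_R_inf Pi_env_plus_R_env_tendsto) auto
  moreover have "eventually (\<lambda>n. 1 / (R_env a b n * (Pi_env a n + R_env a b n))
      = (1 / R_env a b n - (1 - pmf (Zlaw a b n) 0)) / Pi_env a n) sequentially"
    unfolding eventually_sequentially by (auto intro!: exI[of _ 1] survival_deviation_eq[symmetric])
  ultimately show ?thesis
    by (simp add: tendsto_cong power2_eq_square)
qed

end

theorem theorem4p1:
  fixes M :: "'w measure" and A B :: "nat \<Rightarrow> 'w \<Rightarrow> real"
  assumes "prob_space M"
    and indep: "prob_space.indep_vars M (\<lambda>_. borel :: (real \<times> real) measure)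
                  (\<lambda>k \<omega>. (A k \<omega>, B k \<omega>)) {1..}"
    and ident: "\<forall>k\<ge>1. distr M (borel :: (real \<times> real) measure) (\<lambda>\<omega>. (A k \<omega>, B k \<omega>))
                     = distr M borel (\<lambda>\<omega>. (A 1 \<omega>, B 1 \<omega>))"
    and supp: "\<forall>k\<ge>1. AE \<omega> in M. A k \<omega> > 0 \<and> B k \<omega> > 0 \<and> A k \<omega> + B k \<omega> \<ge> 1"
    and supercrit: "AE \<omega> in M. summable (\<lambda>k. Pi_env (\<lambda>j. A j \<omega>) k * B (Suc k) \<omega>)
                      \<and> \<not> summable (\<lambda>k. B (Suc k) \<omega> / Pi_env (\<lambda>j. A j \<omega>) (Suc k))"
  shows "AE \<omega> in M.
           convergent (\<lambda>n. pmf (Zlaw (\<lambda>j. A j \<omega>) (\<lambda>j. B j \<omega>) n) 0)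
         \<and> 1 / (1 - qext (\<lambda>j. A j \<omega>) (\<lambda>j. B j \<omega>)) = R_inf (\<lambda>j. A j \<omega>) (\<lambda>j. B j \<omega>)
         \<and> 1 \<le> R_inf (\<lambda>j. A j \<omega>) (\<lambda>j. B j \<omega>)
         \<and> qext (\<lambda>j. A j \<omega>) (\<lambda>j. B j \<omega>) < 1
         \<and> (\<lambda>n. (1 / R_env (\<lambda>j. A j \<omega>) (\<lambda>j. B j \<omega>) n
                   - (1 - pmf (Zlaw (\<lambda>j. A j \<omega>) (\<lambda>j. B j \<omega>) n) 0))
                 / Pi_env (\<lambda>j. A j \<omega>) n)
             \<longlonglongrightarrow> 1 / (R_inf (\<lambda>j. A j \<omega>) (\<lambda>j. B j \<omega>))\<^sup>2"
proof -
  have "AE \<omega> in M. \<forall>k. 1 \<le> k \<longrightarrow> 0 < A k \<omega> \<and> 0 < B k \<omega> \<and> 1 \<le> A k \<omega> + B k \<omega>"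
    unfolding AE_all_countable using supp by (auto intro: AE_I2 simp: not_le)
  with supercrit show ?thesis
  proof eventually_elim
    case (elim \<omega>)
    then interpret supercritical_environment "\<lambda>j. A j \<omega>" "\<lambda>j. B j \<omega>"
      by unfold_locales auto
    show ?case
      using extinction_prob_tendsto survival_deviation_tendsto one_le_R_inf
      by (auto simp: qext_eq convergent_def)
  qed
qed

end
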